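(* Let $\mathbf x_1,\ldots,\mathbf x_n\in\mathbb{R}^d\setminus\{\mathbf 0\}$ and suppose the probit likelihood $\ell(\beta)=\prod_{i=1}^n\Phi(\mathbf x_i^T\beta)$ has a unique global maximizer on $\mathbb{R}^d$. Let $\pi(\beta)\propto\ell(\beta)$ (flat prior) and let $P(\beta)=\sum_{j=1}^d a_j\beta_j$ be any first-degree polynomial. Then $\lim_{\rho\to\infty}\int_{\partial B_\rho}\pi\,\nabla P\cdot\mathbf n\,d\sigma=0$, where $B_\rho$ is the ball of radius $\rho$ centered at the origin; consequently the zero-variance estimator is unbiased: $\mathbb{E}_\pi[\mathbf a^T\mathbf z]=0$, where $\mathbf z=-\frac12\nabla\ln\pi$.
   Context: $\Phi$ is the standard normal c.d.f.; $\mathbf n$ is the outward unit normal to the sphere $\partial B_\rho$, $d\sigma$ the surface measure. For linear $P$ and $\psi=P\sqrt\pi$, $\frac{H\psi}{\sqrt\pi}=\mathbf a^T\mathbf z$ where $H=-\frac12\Delta+\frac{\Delta\sqrt\pi}{2\sqrt\pi}$. *)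

theory Defs
  imports "HOL-Analysis.Analysis" "HOL-Probability.Probability"
begin

definition Phi :: "real \<Rightarrow> real" where
  "Phi x = (LBINT t:{..x}. std_normal_density t)"

definition probit_lik :: "nat \<Rightarrow> (nat \<Rightarrow> real^'d) \<Rightarrow> real^'d \<Rightarrow> real" where
  "probit_lik n x \<beta> = (\<Prod>i<n. Phi (x i \<bullet> \<beta>))"

definition probit_post :: "nat \<Rightarrow> (nat \<Rightarrow> real^'d) \<Rightarrow> real^'d \<Rightarrow> real" where
  "probit_post n x \<beta> = probit_lik n x \<beta> / (\<integral>b. probit_lik n x b \<partial>lborel)"

definition grad :: "('a::real_inner \<Rightarrow> real) \<Rightarrow> 'a \<Rightarrow> 'a" where
  "grad f x = (THE D. GDERIV f x :> D)"

text \<open>Surface measure on the sphere of radius rho centred at 0, constructed as the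
  cone measure: push forward of (DIM * rho^(DIM-1)) times Lebesgue measure on the
  punctured unit ball under radial projection x \<mapsto> (rho / |x|) x.  For rho > 0 this is
  the (d-1)-dimensional surface (Hausdorff) measure on the sphere.\<close>
definition sphere_measure :: "real \<Rightarrow> ('a::euclidean_space) measure" where
  "sphere_measure \<rho> =
     distr (density (restrict_space lborel (ball 0 1 - {0}))
              (\<lambda>_. ennreal (real DIM('a) * \<rho> ^ (DIM('a) - 1))))
           borel (\<lambda>x. (\<rho> / norm x) *\<^sub>R x)"

definition sphere_integral :: "real \<Rightarrow> ('a::euclidean_space \<Rightarrow> real) \<Rightarrow> real" where
  "sphere_integral \<rho> f = (\<integral>y. f y \<partial>sphere_measure \<rho>)"

end

theory Submission
  imports Defs "HOL-Real_Asymp.Real_Asymp"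
begin

text \<open>If some nonzero direction v had x_i \<bullet> v \<ge> 0 for all i, the likelihood would be
  nondecreasing along v, so a maximiser b would not be unique (b + v would be one too).
  Compactness of the unit sphere then gives c > 0 with min_i x_i \<bullet> \<beta> \<le> -c|\<beta>|, and the
  Gaussian tail \<Phi>(m) \<le> 2 exp(-m^2/2) for m \<le> 0 bounds the likelihood and its gradient by
  multiples of exp(-c^2|\<beta>|^2/2).  This makes L integrable and the sphere integrals
  O(\<rho>^(d-1) exp(-c^2\<rho>^2/2)).  Since \<nabla> ln \<pi> = \<nabla>L/L, the estimator's integrand is a
  multiple of a \<bullet> \<nabla>L, whose integral vanishes: it is the dominated limit of the difference
  quotients (L(\<beta> + h a) - L(\<beta>))/h, each of which integrates to 0 by translation invariance
  of Lebesgue measure.\<close>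

section \<open>The standard normal distribution\<close>

abbreviation phi :: "real \<Rightarrow> real" where "phi \<equiv> std_normal_density"

lemma phi_pos: "0 < phi t"
  by (simp add: normal_density_pos)

lemma phi_le_exp: "phi t \<le> exp (- t\<^sup>2 / 2)"
  unfolding std_normal_density_def using pi_gt3 by (auto simp: divide_le_eq real_le_rsqrt)

lemma phi_le_1: "phi t \<le> 1"
  using phi_le_exp[of t] by (simp add: order_trans)

lemma continuous_on_phi: "continuous_on S phi"
  unfolding std_normal_density_def by (intro continuous_intros) auto

lemma phi_has_real_derivative: "(phi has_real_derivative (- t * phi t)) (at t)"
  unfolding std_normal_density_def
  by (auto intro!: derivative_eq_intros simp: power2_eq_square field_simps)

lemma phi_tendsto_at_bot: "(phi \<longlongrightarrow> 0) at_bot"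
  unfolding std_normal_density_def by real_asymp

lemma Phi_has_integral: "(phi has_integral Phi u) {..u}"
proof -
  have "set_integrable lborel {..u} phi"
    unfolding set_integrable_def by (intro integrable_mult_indicator) auto
  from set_borel_integral_eq_integral[OF this] show ?thesis
    unfolding Phi_def by (metis has_integral_integral)
qed

lemma Phi_eq_add_integral: "c \<le> u \<Longrightarrow> Phi u = Phi c + integral {c..u} phi"
proof -
  assume "c \<le> u"
  have "phi integrable_on {c..u}"
    using continuous_on_phi integrable_continuous_interval by blast
  then have "(phi has_integral (Phi c + integral {c..u} phi)) ({..c} \<union> {c..u})"
    by (intro has_integral_Un[OF Phi_has_integral] integrable_integral)
      (auto intro: negligible_subset[of "{c}"])
  moreover have "{..c} \<union> {c..u} = {..u}" using \<open>c \<le> u\<close> by auto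
  ultimately show ?thesis using Phi_has_integral has_integral_unique by metis
qed

lemma Phi_has_real_derivative: "(Phi has_real_derivative phi t) (at t)"
proof -
  have "((\<lambda>u. Phi (t - 1) + integral {t - 1..u} phi) has_real_derivative phi t)
      (at t within {t - 1..t + 1})"
    by (auto intro!: derivative_eq_intros integral_has_real_derivative continuous_on_phi)
  then have "(Phi has_real_derivative phi t) (at t within {t - 1..t + 1})"
    by (rule has_field_derivative_transform_within[where d = 1]) (auto simp: Phi_eq_add_integral)
  then show ?thesis by (simp add: at_within_Icc_at)
qed

lemma isCont_Phi: "isCont Phi t"
  using Phi_has_real_derivative by (rule DERIV_isCont)

lemma continuous_on_Phi [continuous_intros]:
  "continuous_on S f \<Longrightarrow> continuous_on S (\<lambda>y. Phi (f y))"
  by (rule continuous_on_compose2[of UNIV Phi]) (auto intro: continuous_at_imp_continuous_on isCont_Phi)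

lemma Phi_eq_cdf: "Phi = cdf (density lborel phi)"
proof
  fix u
  have int: "integrable lborel (\<lambda>t. phi t * indicator {..u} t)"
    using integrable_mult_indicator[of "{..u}" lborel phi] by (simp add: mult.commute)
  have "emeasure (density lborel phi) {..u} = (\<integral>\<^sup>+t. ennreal (phi t * indicator {..u} t) \<partial>lborel)"
    by (subst emeasure_density) (auto intro!: nn_integral_cong simp: indicator_def)
  also have "\<dots> = ennreal (\<integral>t. phi t * indicator {..u} t \<partial>lborel)"
    using int by (rule nn_integral_eq_integral) auto
  finally show "Phi u = cdf (density lborel phi) u"
    unfolding cdf_def Phi_def set_lebesgue_integral_def measure_def
    by (simp add: mult.commute integral_nonneg_AE)
qed

interpretation std_normal: real_distribution "density lborel phi"
  by (simp add: real_distribution_def real_distribution_axioms_def prob_space_normal_density)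

lemma Phi_nonneg: "0 \<le> Phi u"
  unfolding Phi_eq_cdf by (rule std_normal.cdf_nonneg)

lemma Phi_le_1: "Phi u \<le> 1"
  unfolding Phi_eq_cdf by (rule std_normal.cdf_bounded_prob)

lemma Phi_tendsto_at_bot: "(Phi \<longlongrightarrow> 0) at_bot"
  unfolding Phi_eq_cdf by (rule std_normal.cdf_lim_at_bot)

lemma Phi_mono: "u \<le> v \<Longrightarrow> Phi u \<le> Phi v"
  by (rule DERIV_nonneg_imp_nondecreasing)
    (auto intro: Phi_has_real_derivative less_imp_le[OF phi_pos])

lemma Phi_pos: "0 < Phi u"
proof -
  have "Phi (u - 1) < Phi u"
    by (rule DERIV_pos_imp_increasing) (auto intro: Phi_has_real_derivative phi_pos)
  then show ?thesis using Phi_nonneg[of "u - 1"] by linarith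
qed

text \<open>Mills' inequality: \<phi> - \<Phi> vanishes at -\<infinity> and has derivative -t\<phi>(t) - \<phi>(t) \<ge> 0 for t \<le> -1.\<close>
lemma Phi_le_phi: "m \<le> -1 \<Longrightarrow> Phi m \<le> phi m"
proof -
  assume m: "m \<le> -1"
  let ?g = "\<lambda>t. phi t - Phi t"
  have phi_le: "phi t \<le> - (t * phi t)" if "t \<le> -1" for t
    using mult_right_mono[of 1 "- t" "phi t"] that less_imp_le[OF phi_pos] by simp
  have mono: "?g y \<le> ?g m" if "y \<le> m" for y
    by (rule DERIV_nonneg_imp_nondecreasing[OF that])
      (auto intro!: exI derivative_eq_intros phi_has_real_derivative Phi_has_real_derivative
        intro: phi_le simp: algebra_simps dest!: order.trans[OF _ m])
  have "(?g \<longlongrightarrow> 0 - 0) at_bot"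
    by (intro tendsto_diff phi_tendsto_at_bot Phi_tendsto_at_bot)
  then have "0 \<le> ?g m"
    by (intro tendsto_le[OF _ tendsto_const]) (auto simp: eventually_at_bot_linorder intro!: exI[of _ m] mono)
  then show ?thesis by simp
qed

lemma Phi_le_exp: "m \<le> 0 \<Longrightarrow> Phi m \<le> 2 * exp (- m\<^sup>2 / 2)"
proof (cases "m \<le> -1")
  case True
  then show ?thesis
    using Phi_le_phi[of m] phi_le_exp[of m] exp_gt_zero[of "- m\<^sup>2 / 2"] by linarith
next
  case False
  assume "m \<le> 0"
  with False have "m\<^sup>2 \<le> 1"
    by (simp add: abs_square_le_1)
  then have "exp (- 1 / 2) \<le> exp (- m\<^sup>2 / 2)" by simp
  moreover have "1 \<le> 2 * exp (- 1 / 2 :: real)"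
  proof -
    have "(exp (1 / 2))\<^sup>2 \<le> (2 :: real)\<^sup>2"
      using exp_le by (simp add: power2_eq_square exp_add[symmetric])
    then have "exp (1 / 2 :: real) \<le> 2" by (rule power2_le_imp_le) simp
    then show ?thesis by (simp add: exp_minus field_simps)
  qed
  ultimately show ?thesis using Phi_le_1[of m] by linarith
qed

section \<open>Integrals over euclidean space\<close>

lemma integrable_exp_neg_square:
  assumes "0 < k"
  shows "integrable lborel (\<lambda>t::real. exp (- k * t\<^sup>2))"
proof -
  define \<sigma> where "\<sigma> = sqrt (1 / (2 * k))"
  have \<sigma>: "0 < \<sigma>" "\<sigma>\<^sup>2 = 1 / (2 * k)" unfolding \<sigma>_def using assms by simp_all
  have "integrable lborel (\<lambda>t. sqrt (2 * pi * \<sigma>\<^sup>2) * normal_density 0 \<sigma> t)"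
    using \<sigma>(1) by (intro integrable_mult_right integrable_normal_density)
  moreover have "sqrt (2 * pi * \<sigma>\<^sup>2) * normal_density 0 \<sigma> t = exp (- k * t\<^sup>2)" for t
    unfolding normal_density_def using \<sigma>(1) assms by (simp add: \<sigma>(2) field_simps)
  ultimately show ?thesis by simp
qed

text \<open>The Gaussian factorises over the coordinates, so its integral is a product of
  one-dimensional ones by Tonelli.\<close>
lemma integrable_exp_neg_norm_square:
  assumes "0 < k"
  shows "integrable lborel (\<lambda>\<beta>::'a::euclidean_space. exp (- k * (norm \<beta>)\<^sup>2))"
proof (rule integrableI_bounded)
  have factor: "exp (- (k * (norm \<beta>)\<^sup>2)) = (\<Prod>b\<in>Basis. exp (- (k * (\<beta> \<bullet> b)\<^sup>2)))" for \<beta> :: 'a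
  proof -
    have "(norm \<beta>)\<^sup>2 = (\<Sum>b\<in>Basis. (\<beta> \<bullet> b)\<^sup>2)"
      unfolding power2_norm_eq_inner by (subst euclidean_inner) (simp add: power2_eq_square)
    then show ?thesis by (simp add: exp_sum[symmetric] sum_distrib_left sum_negf)
  qed
  define K where "K = (\<integral>t. exp (- k * t\<^sup>2) \<partial>lborel)"
  have K: "(\<integral>\<^sup>+t. ennreal (exp (- k * t\<^sup>2)) \<partial>lborel) = ennreal K"
    unfolding K_def by (rule nn_integral_eq_integral[OF integrable_exp_neg_square[OF assms]]) auto
  have "(\<integral>\<^sup>+\<beta>. ennreal (norm (exp (- k * (norm (\<beta>::'a))\<^sup>2))) \<partial>lborel)
      = (\<integral>\<^sup>+\<beta>. (\<Prod>b\<in>Basis. ennreal (exp (- k * ((\<beta>::'a) \<bullet> b)\<^sup>2))) \<partial>lborel)"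
    by (auto simp: factor prod_ennreal abs_prod intro!: nn_integral_cong)
  also have "\<dots> = (\<Prod>b\<in>(Basis::'a set). (\<integral>\<^sup>+t. ennreal (exp (- k * t\<^sup>2)) \<partial>lborel))"
    by (rule nn_integral_lborel_prod) auto
  also have "\<dots> = ennreal (K ^ DIM('a))"
    unfolding K by (simp add: K_def integral_nonneg_AE ennreal_power)
  finally show "(\<integral>\<^sup>+\<beta>. ennreal (norm (exp (- k * (norm (\<beta>::'a))\<^sup>2))) \<partial>lborel) < \<infinity>"
    by simp
qed (measurable)

lemma le_mult_exp_imp_nonneg: "0 \<le> y \<Longrightarrow> y \<le> M * exp t \<Longrightarrow> 0 \<le> (M::real)"
  using order.trans[of 0 y "M * exp t"] by (simp add: zero_le_mult_iff)

lemma exp_neg_norm_square_translate_le: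
  fixes \<beta> v :: "'a::real_normed_vector"
  assumes "0 \<le> k" and "norm v \<le> r"
  shows "exp (- k * (norm (\<beta> + v))\<^sup>2) \<le> exp (k * r\<^sup>2) * exp (- (k / 2) * (norm \<beta>)\<^sup>2)"
proof -
  have "norm \<beta> \<le> norm (\<beta> + v) + r"
    using norm_triangle_ineq4[of "\<beta> + v" v] assms(2) by simp
  then have "(norm \<beta>)\<^sup>2 \<le> (norm (\<beta> + v) + r)\<^sup>2"
    by (intro power_mono) auto
  also have "\<dots> \<le> 2 * (norm (\<beta> + v))\<^sup>2 + 2 * r\<^sup>2"
    using sum_squares_ge_zero[of "norm (\<beta> + v) - r" 0]
    by (simp add: power2_eq_square algebra_simps)
  finally have "k * (norm \<beta>)\<^sup>2 \<le> k * (2 * (norm (\<beta> + v))\<^sup>2 + 2 * r\<^sup>2)"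
    using assms by (intro mult_left_mono) auto
  then show ?thesis by (simp add: exp_add[symmetric] algebra_simps)
qed

lemma
  fixes f :: "'a::euclidean_space \<Rightarrow> real"
  assumes "integrable lborel f"
  shows integrable_translate_lborel: "integrable lborel (\<lambda>\<beta>. f (\<beta> + v))"
    and integral_translate_lborel: "(\<integral>\<beta>. f (\<beta> + v) \<partial>lborel) = integral\<^sup>L lborel f"
proof -
  have f: "f \<in> borel_measurable borel"
    using borel_measurable_integrable[OF assms] by simp
  have distr: "distr lborel borel ((+) v) = lborel" by (rule lborel_distr_plus)
  have "integrable (distr lborel borel ((+) v)) f" unfolding distr by (rule assms)
  then show "integrable lborel (\<lambda>\<beta>. f (\<beta> + v))"
    using integrable_distr_eq[of "(+) v" lborel borel f] by (simp add: add.commute)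
  have "integral\<^sup>L lborel f = (\<integral>\<beta>. f (v + \<beta>) \<partial>lborel)"
    using f by (subst distr[symmetric], subst integral_distr) auto
  then show "(\<integral>\<beta>. f (\<beta> + v) \<partial>lborel) = integral\<^sup>L lborel f" by (simp add: add.commute)
qed

lemma integral_pos_lborel:
  fixes f :: "'a::euclidean_space \<Rightarrow> real"
  assumes "integrable lborel f" and "\<And>x. 0 < f x"
  shows "0 < integral\<^sup>L lborel f"
proof -
  have "integral\<^sup>L lborel f \<noteq> 0"
  proof
    assume "integral\<^sup>L lborel f = 0"
    then have "AE x in lborel. f x = 0"
      using integral_nonneg_eq_0_iff_AE[OF assms(1)] assms(2) by (simp add: less_imp_le)
    with assms(2) have "AE x::'a in lborel. False" by (simp add: less_le)
    then show False by (simp add: ae_filter_eq_bot_iff trivial_limit_def[symmetric])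
  qed
  moreover have "0 \<le> integral\<^sup>L lborel f"
    using assms(2) by (intro integral_nonneg_AE) (simp add: less_imp_le)
  ultimately show ?thesis by simp
qed

lemma grad_eqI:
  assumes "GDERIV f b :> D"
  shows "grad f b = D"
  unfolding grad_def
proof (rule the_equality)
  show "GDERIV f b :> D" by (rule assms)
next
  fix D' assume "GDERIV f b :> D'"
  from this assms have "(\<lambda>h. h \<bullet> D') = (\<lambda>h. h \<bullet> D)"
    unfolding gderiv_def by (rule has_derivative_unique)
  from fun_cong[OF this, of "D' - D"] have "(D' - D) \<bullet> (D' - D) = 0"
    by (simp add: inner_diff_right)
  then show "D' = D" by simp
qed

lemma gderiv_ln_divide:
  assumes "GDERIV f \<beta> :> D" and "0 < f \<beta>" and "0 < Z"
  shows "GDERIV (\<lambda>b. ln (f b / Z)) \<beta> :> (1 / f \<beta>) *\<^sub>R D"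
proof -
  have "DERIV (\<lambda>y. ln (y / Z)) (f \<beta>) :> 1 / f \<beta>"
    using assms(2,3) by (auto intro!: derivative_eq_intros simp: field_simps)
  from GDERIV_DERIV_compose[OF assms(1) this] show ?thesis .
qed

lemma gderiv_along_line:
  assumes "GDERIV f (\<beta> + s *\<^sub>R a) :> D"
  shows "((\<lambda>t. f (\<beta> + t *\<^sub>R a)) has_real_derivative (a \<bullet> D)) (at s)"
proof -
  have "((\<lambda>t. \<beta> + t *\<^sub>R a) has_derivative (\<lambda>t. t *\<^sub>R a)) (at s)"
    by (auto intro!: derivative_eq_intros)
  from has_derivative_compose[OF this assms[unfolded gderiv_def]] show ?thesis
    unfolding has_field_derivative_def
    by (rule has_derivative_eq_rhs) (auto simp: fun_eq_iff mult.commute)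
qed

text \<open>The difference quotients (f(\<beta> + h a) - f(\<beta>))/h all integrate to 0; by the mean value
  theorem they are dominated by a Gaussian, so their limit a \<bullet> Df also integrates to 0.\<close>
lemma integral_inner_gderiv_eq_0:
  fixes f :: "'a::euclidean_space \<Rightarrow> real"
  assumes f: "integrable lborel f"
    and Df: "\<And>\<beta>. GDERIV f \<beta> :> Df \<beta>"
    and k: "0 < k" and bound: "\<And>\<beta>. norm (Df \<beta>) \<le> M * exp (- k * (norm \<beta>)\<^sup>2)"
  shows "integrable lborel (\<lambda>\<beta>. a \<bullet> Df \<beta>) \<and> (\<integral>\<beta>. a \<bullet> Df \<beta> \<partial>lborel) = 0"
proof -
  define h where "h j = inverse (real (Suc j))" for j
  define q where "q j \<beta> = (f (\<beta> + h j *\<^sub>R a) - f \<beta>) / h j" for j \<beta>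
  define w where "w \<beta> = norm a * M * exp (k * (norm a)\<^sup>2) * exp (- (k / 2) * (norm \<beta>)\<^sup>2)"
    for \<beta> :: 'a
  have h: "0 < h j" "h j \<le> 1" for j unfolding h_def by (auto simp: field_simps)
  have M: "0 \<le> M" using le_mult_exp_imp_nonneg[OF norm_ge_zero bound] .
  have q_int: "integrable lborel (q j)" and q_integral: "integral\<^sup>L lborel (q j) = 0" for j
    unfolding q_def using f integrable_translate_lborel[OF f] integral_translate_lborel[OF f]
    by auto
  have q_lim: "(\<lambda>j. q j \<beta>) \<longlonglongrightarrow> a \<bullet> Df \<beta>" for \<beta>
  proof -
    have "((\<lambda>t. (f (\<beta> + t *\<^sub>R a) - f (\<beta> + 0 *\<^sub>R a)) / (t - 0)) \<longlongrightarrow> a \<bullet> Df \<beta>) (at 0)"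
      using gderiv_along_line[of f \<beta> 0 a] Df unfolding has_field_derivative_iff by simp
    moreover have "filterlim h (at 0) sequentially"
      unfolding filterlim_at h_def using LIMSEQ_inverse_real_of_nat by auto
    ultimately show ?thesis
      unfolding q_def by (auto dest: filterlim_compose)
  qed
  have q_bound: "norm (q j \<beta>) \<le> w \<beta>" for j \<beta>
  proof -
    obtain z where z: "0 < z" "z < h j"
      "f (\<beta> + h j *\<^sub>R a) - f (\<beta> + 0 *\<^sub>R a) = (h j - 0) * (a \<bullet> Df (\<beta> + z *\<^sub>R a))"
      using MVT2[OF h(1)[of j], of "\<lambda>t. f (\<beta> + t *\<^sub>R a)" "\<lambda>s. a \<bullet> Df (\<beta> + s *\<^sub>R a)"]
        gderiv_along_line[OF Df] by blast
    have "norm (q j \<beta>) \<le> norm a * norm (Df (\<beta> + z *\<^sub>R a))"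
      using z(3) h[of j] by (simp add: q_def Cauchy_Schwarz_ineq2)
    also have "\<dots> \<le> norm a * (M * exp (- k * (norm (\<beta> + z *\<^sub>R a))\<^sup>2))"
      by (intro mult_left_mono bound) auto
    also have "\<dots> \<le> w \<beta>"
      unfolding w_def mult.assoc
      using z h[of j] k M exp_neg_norm_square_translate_le[of k "z *\<^sub>R a" "norm a" \<beta>]
      by (intro mult_left_mono) (auto simp: mult_left_le_one_le)
    finally show ?thesis .
  qed
  have w_int: "integrable lborel w"
    unfolding w_def using k by (intro integrable_mult_right integrable_exp_neg_norm_square) auto
  have q_meas: "q j \<in> borel_measurable lborel" for j
    using q_int by (rule borel_measurable_integrable)
  have Df_meas: "(\<lambda>\<beta>. a \<bullet> Df \<beta>) \<in> borel_measurable lborel"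
    by (rule borel_measurable_LIMSEQ_real[OF q_lim q_meas])
  note dominated = Df_meas q_meas w_int AE_I2[OF q_lim] AE_I2[OF q_bound]
  have "(\<lambda>j. integral\<^sup>L lborel (q j)) \<longlonglongrightarrow> (\<integral>\<beta>. a \<bullet> Df \<beta> \<partial>lborel)"
    by (rule integral_dominated_convergence[OF dominated])
  then show ?thesis
    using integrable_dominated_convergence[OF dominated] by (simp add: q_integral LIMSEQ_const_iff)
qed

section \<open>Integrals over spheres\<close>

lemma norm_integral_le_measure:
  fixes f :: "'a \<Rightarrow> 'b::{banach, second_countable_topology}"
  assumes "AE x in M. norm (f x) \<le> B" and "0 \<le> B" and "emeasure M (space M) < \<infinity>"
  shows "norm (integral\<^sup>L M f) \<le> B * measure M (space M)"
proof (cases "integrable M f")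
  case True
  interpret finite_measure M by (rule finite_measureI) (use assms(3) in simp)
  have "norm (integral\<^sup>L M f) \<le> (\<integral>x. norm (f x) \<partial>M)" by (rule integral_norm_bound)
  also have "\<dots> \<le> (\<integral>x. B \<partial>M)"
    using True assms(1) by (intro integral_mono_AE) auto
  finally show ?thesis by (simp add: mult.commute)
qed (use assms(2) in \<open>simp add: not_integrable_integral_eq\<close>)

lemma
  fixes \<rho> :: real
  assumes "0 < \<rho>"
  shows AE_sphere_measure: "AE z in sphere_measure \<rho>. norm (z::'a::euclidean_space) = \<rho>"
    and emeasure_sphere_measure: "emeasure (sphere_measure \<rho> :: 'a measure) (space (sphere_measure \<rho>)) =
      ennreal (real DIM('a) * \<rho> ^ (DIM('a) - 1) * measure lborel (ball (0::'a) 1 - {0}))"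
proof -
  define S :: "'a set" where "S = ball 0 1 - {0}"
  define K where "K = real DIM('a) * \<rho> ^ (DIM('a) - 1)"
  define N where "N = density (restrict_space lborel S) (\<lambda>_. ennreal K)"
  define T :: "'a \<Rightarrow> 'a" where "T y = (\<rho> / norm y) *\<^sub>R y" for y
  have sphere: "sphere_measure \<rho> = distr N borel T"
    unfolding sphere_measure_def N_def T_def S_def K_def ..
  have S: "S \<in> sets lborel" unfolding S_def by simp
  have space_N: "space N = S" unfolding N_def by (simp add: space_restrict_space)
  have T: "T \<in> measurable N borel"
    unfolding N_def T_def measurable_cong_sets[OF sets_density refl]
    by (rule measurable_restrict_space1) measurable
  have "AE y in N. norm (T y) = \<rho>"
    using assms by (intro AE_I2) (simp add: space_N S_def T_def)
  moreover have "{z \<in> space borel. norm z = \<rho>} \<in> sets borel" by measurable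
  ultimately show "AE z in sphere_measure \<rho>. norm (z::'a) = \<rho>"
    unfolding sphere using AE_distr_iff[OF T, where P = "\<lambda>z. norm z = \<rho>"] by simp
  have "emeasure lborel S < \<infinity>"
    unfolding S_def by (rule emeasure_bounded_finite) (rule bounded_subset[OF bounded_ball], auto)
  then have "emeasure lborel S = ennreal (measure lborel S)"
    by (simp add: emeasure_eq_ennreal_measure)
  moreover have "emeasure N (space N) = ennreal K * emeasure (restrict_space lborel S) S"
    unfolding N_def space_N[unfolded N_def]
    by (rule emeasure_density_const)
      (use sets.top[of "restrict_space lborel S"] in \<open>simp_all add: space_restrict_space\<close>)
  moreover have "emeasure (restrict_space lborel S) S = emeasure lborel S"
    using S by (simp add: emeasure_restrict_space)
  ultimately show "emeasure (sphere_measure \<rho> :: 'a measure) (space (sphere_measure \<rho>)) =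
      ennreal (real DIM('a) * \<rho> ^ (DIM('a) - 1) * measure lborel (ball (0::'a) 1 - {0}))"
    unfolding sphere using T assms
    by (simp add: emeasure_distr ennreal_mult K_def S_def)
qed

lemma sphere_integral_bound:
  fixes f :: "'a::euclidean_space \<Rightarrow> real"
  assumes "0 < \<rho>" and "0 \<le> B" and "\<And>z. norm z = \<rho> \<Longrightarrow> \<bar>f z\<bar> \<le> B"
  shows "\<bar>sphere_integral \<rho> f\<bar>
    \<le> B * (real DIM('a) * \<rho> ^ (DIM('a) - 1) * measure lborel (ball (0::'a) 1 - {0}))"
proof -
  have bounded: "AE z in sphere_measure \<rho>. norm (f z) \<le> B"
    using AE_sphere_measure[OF assms(1)] by eventually_elim (use assms(3) in simp)
  note emeasure = emeasure_sphere_measure[OF assms(1), where 'a = 'a]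
  have "norm (integral\<^sup>L (sphere_measure \<rho>) f)
      \<le> B * measure (sphere_measure \<rho> :: 'a measure) (space (sphere_measure \<rho>))"
    by (rule norm_integral_le_measure[OF bounded assms(2)]) (simp add: emeasure)
  moreover have "measure (sphere_measure \<rho> :: 'a measure) (space (sphere_measure \<rho>)) =
      real DIM('a) * \<rho> ^ (DIM('a) - 1) * measure lborel (ball (0::'a) 1 - {0})"
    using emeasure assms(1) by (intro measure_eq_emeasure_eq_ennreal) auto
  ultimately show ?thesis by (simp add: sphere_integral_def)
qed

lemma sphere_integral_tendsto_0:
  fixes f :: "'a::euclidean_space \<Rightarrow> real"
  assumes k: "0 < k" and bound: "\<And>z. \<bar>f z\<bar> \<le> M * exp (- k * (norm z)\<^sup>2)"
  shows "((\<lambda>\<rho>. sphere_integral \<rho> f) \<longlongrightarrow> 0) at_top"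
proof (rule Lim_null_comparison)
  define C where "C = M * real DIM('a) * measure lborel (ball (0::'a) 1 - {0})"
  have M: "0 \<le> M" using le_mult_exp_imp_nonneg[OF abs_ge_zero bound] .
  show "\<forall>\<^sub>F \<rho> in at_top. norm (sphere_integral \<rho> f) \<le> C * (\<rho> ^ (DIM('a) - 1) * exp (- k * \<rho>\<^sup>2))"
  proof (rule eventually_mono[OF eventually_gt_at_top[of 0]])
    fix \<rho> :: real assume "0 < \<rho>"
    have "\<bar>f z\<bar> \<le> M * exp (- k * \<rho>\<^sup>2)" if "norm z = \<rho>" for z
      using bound[of z] that by simp
    from sphere_integral_bound[OF \<open>0 < \<rho>\<close> _ this] M
    show "norm (sphere_integral \<rho> f) \<le> C * (\<rho> ^ (DIM('a) - 1) * exp (- k * \<rho>\<^sup>2))"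
      by (simp add: C_def mult_ac)
  qed
  have "((\<lambda>\<rho>::real. \<rho> ^ (DIM('a) - 1) * exp (- k * \<rho>\<^sup>2)) \<longlongrightarrow> 0) at_top"
    using k by real_asymp
  then show "((\<lambda>\<rho>. C * (\<rho> ^ (DIM('a) - 1) * exp (- k * \<rho>\<^sup>2))) \<longlongrightarrow> 0) at_top"
    by (rule tendsto_mult_right_zero)
qed

lemma abs_inner_sgn_le: "\<bar>a \<bullet> (\<beta> /\<^sub>R norm \<beta>)\<bar> \<le> norm a"
proof -
  have "\<bar>a \<bullet> (\<beta> /\<^sub>R norm \<beta>)\<bar> \<le> norm a * norm (\<beta> /\<^sub>R norm \<beta>)"
    by (rule Cauchy_Schwarz_ineq2)
  also have "\<dots> \<le> norm a" by (cases "\<beta> = 0") simp_all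
  finally show ?thesis .
qed

section \<open>The probit likelihood\<close>

lemma prod_le_factor:
  fixes g :: "'a \<Rightarrow> real"
  assumes "finite A" and "k \<in> A" and "\<And>j. j \<in> A \<Longrightarrow> 0 \<le> g j \<and> g j \<le> 1"
  shows "prod g A \<le> g k"
proof -
  have "prod g A = g k * prod g (A - {k})"
    using assms(1,2) by (rule prod.remove)
  also have "\<dots> \<le> g k * 1"
    using assms by (intro mult_left_mono prod_le_1) auto
  finally show ?thesis by simp
qed

lemma probit_lik_pos: "0 < probit_lik n x \<beta>"
  unfolding probit_lik_def by (intro prod_pos) (auto intro: Phi_pos)

lemma probit_lik_borel_measurable [measurable]: "probit_lik n x \<in> borel_measurable borel"
  unfolding probit_lik_def by (intro borel_measurable_continuous_onI continuous_intros)

definition probit_lik_grad :: "nat \<Rightarrow> (nat \<Rightarrow> real^'d) \<Rightarrow> real^'d \<Rightarrow> real^'d" where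
  "probit_lik_grad n x \<beta> =
     (\<Sum>i<n. (phi (x i \<bullet> \<beta>) * (\<Prod>j\<in>{..<n} - {i}. Phi (x j \<bullet> \<beta>))) *\<^sub>R x i)"

lemma probit_lik_has_gderiv: "GDERIV (probit_lik n x) \<beta> :> probit_lik_grad n x \<beta>"
proof -
  have "((\<lambda>b. Phi (x i \<bullet> b)) has_derivative (\<lambda>y. (x i \<bullet> y) * phi (x i \<bullet> \<beta>))) (at \<beta>)" for i
    by (rule DERIV_compose_FDERIV[OF Phi_has_real_derivative]) (auto intro!: derivative_eq_intros)
  from has_derivative_prod[OF this] show ?thesis
    unfolding gderiv_def probit_lik_def
    by (rule has_derivative_eq_rhs)
      (auto simp: probit_lik_grad_def inner_sum_right inner_commute fun_eq_iff algebra_simps)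
qed

lemma probit_unique_max_imp_inner_neg:
  assumes uniq: "\<exists>!b. \<forall>\<beta>. probit_lik n x \<beta> \<le> probit_lik n x b" and "v \<noteq> 0"
  shows "\<exists>i<n. x i \<bullet> v < 0"
proof (rule ccontr)
  assume "\<not> ?thesis"
  then have nonneg: "0 \<le> x i \<bullet> v" if "i < n" for i using that by (meson not_less)
  from uniq obtain b where b: "\<forall>\<beta>. probit_lik n x \<beta> \<le> probit_lik n x b"
    and b_unique: "\<And>b'. \<forall>\<beta>. probit_lik n x \<beta> \<le> probit_lik n x b' \<Longrightarrow> b' = b" by blast
  have "probit_lik n x b \<le> probit_lik n x (b + v)"
    unfolding probit_lik_def
    by (intro prod_mono) (auto intro!: Phi_nonneg Phi_mono simp: inner_add_right nonneg)
  with b have "b + v = b" by (intro b_unique) (auto intro: order.trans)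
  with \<open>v \<noteq> 0\<close> show False by simp
qed

text \<open>h v = \<Sum>_i min 0 (x_i \<bullet> v) is continuous and negative on the unit sphere, so its
  maximum there is some -n c < 0; and h v > -n c whenever every x_i \<bullet> v exceeds -c.\<close>
lemma probit_unique_max_imp_uniform_descent:
  fixes x :: "nat \<Rightarrow> real^'d"
  assumes uniq: "\<exists>!b. \<forall>\<beta>. probit_lik n x \<beta> \<le> probit_lik n x b"
  obtains c where "0 < c" and "\<And>\<beta>. \<exists>i<n. x i \<bullet> \<beta> \<le> - c * norm \<beta>"
proof -
  have "0 < n"
    using probit_unique_max_imp_inner_neg[OF uniq, of "axis undefined 1"] by auto
  define h where "h v = (\<Sum>i<n. min 0 (x i \<bullet> v))" for v :: "real^'d"
  have "continuous_on (sphere 0 1) h" unfolding h_def by (intro continuous_intros)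
  moreover have "sphere (0::real^'d) 1 \<noteq> {}" by simp
  ultimately obtain w where w: "norm w = 1" and w_max: "\<And>v. norm v = 1 \<Longrightarrow> h v \<le> h w"
    using continuous_attains_sup[OF compact_sphere] by (metis mem_sphere_0)
  from w have "w \<noteq> 0" by auto
  then obtain j where j: "j < n" "x j \<bullet> w < 0"
    using probit_unique_max_imp_inner_neg[OF uniq] by blast
  have "h w = min 0 (x j \<bullet> w) + (\<Sum>i\<in>{..<n} - {j}. min 0 (x i \<bullet> w))"
    unfolding h_def using j(1) by (simp add: sum.remove)
  moreover have "(\<Sum>i\<in>{..<n} - {j}. min 0 (x i \<bullet> w)) \<le> 0" by (intro sum_nonpos) auto
  ultimately have "h w < 0" using j(2) by linarith
  define c where "c = - h w / n"
  have "0 < c" unfolding c_def using \<open>h w < 0\<close> \<open>0 < n\<close> by (simp add: divide_neg_pos)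
  have unit: "\<exists>i<n. x i \<bullet> v \<le> - c" if "norm v = 1" for v
  proof (rule ccontr)
    assume "\<not> ?thesis"
    then have "(\<Sum>i<n. - c) < h v"
      unfolding h_def using \<open>0 < n\<close> \<open>0 < c\<close> by (intro sum_strict_mono) auto
    moreover have "(\<Sum>i<n. - c) = h w" unfolding c_def using \<open>0 < n\<close> by simp
    ultimately show False using w_max[OF that] by simp
  qed
  have "\<exists>i<n. x i \<bullet> \<beta> \<le> - c * norm \<beta>" for \<beta>
  proof (cases "\<beta> = 0")
    case False
    then obtain i where "i < n" "x i \<bullet> (\<beta> /\<^sub>R norm \<beta>) \<le> - c"
      using unit[of "\<beta> /\<^sub>R norm \<beta>"] by auto
    with False show ?thesis
      by (intro exI[of _ i]) (simp add: inner_scaleR_right field_simps)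
  qed (use \<open>0 < n\<close> in auto)
  with \<open>0 < c\<close> show ?thesis by (rule that)
qed

context
  fixes n :: nat and x :: "nat \<Rightarrow> real^'d" and c :: real
  assumes c_pos: "0 < c" and descent: "\<And>\<beta>. \<exists>i<n. x i \<bullet> \<beta> \<le> - c * norm \<beta>"
begin

lemma exp_descent_le: "m \<le> - c * norm \<beta> \<Longrightarrow> exp (- m\<^sup>2 / 2) \<le> exp (- (c\<^sup>2 / 2) * (norm \<beta>)\<^sup>2)"
proof -
  assume m: "m \<le> - c * norm \<beta>"
  have "(c * norm \<beta>)\<^sup>2 \<le> (- m)\<^sup>2"
    using m c_pos by (intro power_mono) auto
  then show ?thesis by (simp add: power_mult_distrib)
qed

lemma Phi_descent_le: "m \<le> - c * norm \<beta> \<Longrightarrow> Phi m \<le> 2 * exp (- (c\<^sup>2 / 2) * (norm \<beta>)\<^sup>2)"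
proof -
  assume m: "m \<le> - c * norm \<beta>"
  moreover have "0 \<le> c * norm \<beta>" using c_pos by simp
  ultimately have "Phi m \<le> 2 * exp (- m\<^sup>2 / 2)" by (intro Phi_le_exp) linarith
  with exp_descent_le[OF m] show ?thesis by linarith
qed

lemma probit_lik_le_gaussian: "probit_lik n x \<beta> \<le> 2 * exp (- (c\<^sup>2 / 2) * (norm \<beta>)\<^sup>2)"
proof -
  obtain k where "k < n" "x k \<bullet> \<beta> \<le> - c * norm \<beta>" using descent by blast
  then show ?thesis
    unfolding probit_lik_def
    using prod_le_factor[of "{..<n}" k "\<lambda>j. Phi (x j \<bullet> \<beta>)"] Phi_descent_le
    by (fastforce intro: Phi_nonneg Phi_le_1 order.trans)
qed

lemma integrable_probit_lik: "integrable lborel (probit_lik n x)"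
proof (rule Bochner_Integration.integrable_bound)
  show "integrable lborel (\<lambda>\<beta>::real^'d. 2 * exp (- (c\<^sup>2 / 2) * (norm \<beta>)\<^sup>2))"
    using c_pos by (intro integrable_mult_right integrable_exp_neg_norm_square) simp
  show "AE \<beta> in lborel. norm (probit_lik n x \<beta>) \<le> norm (2 * exp (- (c\<^sup>2 / 2) * (norm \<beta>)\<^sup>2))"
    using probit_lik_le_gaussian by (intro AE_I2) (simp add: abs_of_pos probit_lik_pos)
qed measurable

text \<open>Each summand of the gradient has a factor \<Phi>(x_k \<bullet> \<beta>) or \<phi>(x_k \<bullet> \<beta>) for a descent
  index k, all other factors lying in [0, 1].\<close>
lemma norm_probit_lik_grad_le:
  "norm (probit_lik_grad n x \<beta>) \<le> (\<Sum>i<n. norm (x i)) * (2 * exp (- (c\<^sup>2 / 2) * (norm \<beta>)\<^sup>2))"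
proof -
  let ?G = "2 * exp (- (c\<^sup>2 / 2) * (norm \<beta>)\<^sup>2)"
  obtain k where k: "k < n" "x k \<bullet> \<beta> \<le> - c * norm \<beta>" using descent by blast
  have summand_le: "phi (x i \<bullet> \<beta>) * (\<Prod>j\<in>{..<n} - {i}. Phi (x j \<bullet> \<beta>)) \<le> ?G" if "i < n" for i
  proof (cases "k = i")
    case True
    have "phi (x i \<bullet> \<beta>) * (\<Prod>j\<in>{..<n} - {i}. Phi (x j \<bullet> \<beta>)) \<le> phi (x i \<bullet> \<beta>)"
      using less_imp_le[OF phi_pos]
      by (intro mult_left_le prod_le_1) (auto intro: Phi_nonneg Phi_le_1)
    also have "\<dots> \<le> exp (- (c\<^sup>2 / 2) * (norm \<beta>)\<^sup>2)"
      using order.trans[OF phi_le_exp exp_descent_le[OF k(2)]] True by simp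
    also have "\<dots> \<le> ?G" by simp
    finally show ?thesis .
  next
    case False
    have "(\<Prod>j\<in>{..<n} - {i}. Phi (x j \<bullet> \<beta>)) \<le> Phi (x k \<bullet> \<beta>)"
      using False k(1) by (intro prod_le_factor) (auto intro: Phi_nonneg Phi_le_1)
    then have "phi (x i \<bullet> \<beta>) * (\<Prod>j\<in>{..<n} - {i}. Phi (x j \<bullet> \<beta>)) \<le> 1 * Phi (x k \<bullet> \<beta>)"
      by (intro mult_mono phi_le_1) (auto intro: prod_nonneg Phi_nonneg)
    then show ?thesis using Phi_descent_le[OF k(2)] by simp
  qed
  have "norm (probit_lik_grad n x \<beta>)
      \<le> (\<Sum>i<n. norm ((phi (x i \<bullet> \<beta>) * (\<Prod>j\<in>{..<n} - {i}. Phi (x j \<bullet> \<beta>))) *\<^sub>R x i))"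
    unfolding probit_lik_grad_def by (rule norm_sum)
  also have "\<dots> \<le> (\<Sum>i<n. norm (x i) * ?G)"
  proof (intro sum_mono)
    fix i assume "i \<in> {..<n}"
    moreover have "0 \<le> phi (x i \<bullet> \<beta>) * (\<Prod>j\<in>{..<n} - {i}. Phi (x j \<bullet> \<beta>))"
      by (intro mult_nonneg_nonneg prod_nonneg) (auto intro: Phi_nonneg less_imp_le[OF phi_pos])
    ultimately show "norm ((phi (x i \<bullet> \<beta>) * (\<Prod>j\<in>{..<n} - {i}. Phi (x j \<bullet> \<beta>))) *\<^sub>R x i)
        \<le> norm (x i) * ?G"
      using summand_le by (simp add: mult.commute mult_left_mono)
  qed
  finally show ?thesis by (simp add: sum_distrib_right)
qed

lemma integral_probit_lik_pos: "0 < integral\<^sup>L lborel (probit_lik n x)"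
  using integrable_probit_lik probit_lik_pos by (rule integral_pos_lborel)

lemma integral_inner_probit_lik_grad:
  "integrable lborel (\<lambda>\<beta>. a \<bullet> probit_lik_grad n x \<beta>)
    \<and> (\<integral>\<beta>. a \<bullet> probit_lik_grad n x \<beta> \<partial>lborel) = 0"
  using c_pos norm_probit_lik_grad_le
  by (intro integral_inner_gderiv_eq_0[OF integrable_probit_lik probit_lik_has_gderiv,
        where k = "c\<^sup>2 / 2" and M = "(\<Sum>i<n. norm (x i)) * 2"]) (auto simp: mult_ac)

lemma sphere_integral_probit_post_tendsto_0:
  assumes "\<And>\<beta>. \<bar>g \<beta>\<bar> \<le> C"
  shows "((\<lambda>\<rho>. sphere_integral \<rho> (\<lambda>\<beta>. probit_post n x \<beta> * g \<beta>)) \<longlongrightarrow> 0) at_top"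
proof -
  define Z where "Z = integral\<^sup>L lborel (probit_lik n x)"
  have Z: "0 < Z" unfolding Z_def by (rule integral_probit_lik_pos)
  have "\<bar>probit_post n x \<beta> * g \<beta>\<bar> \<le> 2 * C / Z * exp (- (c\<^sup>2 / 2) * (norm \<beta>)\<^sup>2)" for \<beta>
  proof -
    have "\<bar>probit_post n x \<beta> * g \<beta>\<bar> = probit_lik n x \<beta> / Z * \<bar>g \<beta>\<bar>"
      unfolding probit_post_def Z_def[symmetric] using probit_lik_pos[of n x \<beta>] Z
      by (simp add: abs_mult)
    also have "\<dots> \<le> 2 * exp (- (c\<^sup>2 / 2) * (norm \<beta>)\<^sup>2) / Z * C"
      using probit_lik_pos[of n x \<beta>] probit_lik_le_gaussian Z assms[of \<beta>]
      by (intro mult_mono divide_right_mono) auto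
    finally show ?thesis by (simp add: field_simps)
  qed
  then show ?thesis
    using c_pos by (intro sphere_integral_tendsto_0[where k = "c\<^sup>2 / 2" and M = "2 * C / Z"]) auto
qed

lemma probit_post_mult_grad_ln:
  "probit_post n x \<beta> * (a \<bullet> (- (1/2) *\<^sub>R grad (\<lambda>b. ln (probit_post n x b)) \<beta>))
    = - 1 / (2 * integral\<^sup>L lborel (probit_lik n x)) * (a \<bullet> probit_lik_grad n x \<beta>)"
  and probit_post_has_gderiv_ln:
  "GDERIV (\<lambda>b. ln (probit_post n x b)) \<beta> :> (1 / probit_lik n x \<beta>) *\<^sub>R probit_lik_grad n x \<beta>"
proof -
  define Z where "Z = integral\<^sup>L lborel (probit_lik n x)"
  have post: "probit_post n x = (\<lambda>b. probit_lik n x b / Z)" unfolding probit_post_def Z_def ..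
  have Z: "0 < Z" unfolding Z_def by (rule integral_probit_lik_pos)
  have gderiv: "GDERIV (\<lambda>b. ln (probit_post n x b)) \<beta> :> (1 / probit_lik n x \<beta>) *\<^sub>R probit_lik_grad n x \<beta>"
    for \<beta> unfolding post using probit_lik_has_gderiv probit_lik_pos Z by (rule gderiv_ln_divide)
  then show "GDERIV (\<lambda>b. ln (probit_post n x b)) \<beta> :> (1 / probit_lik n x \<beta>) *\<^sub>R probit_lik_grad n x \<beta>" .
  show "probit_post n x \<beta> * (a \<bullet> (- (1/2) *\<^sub>R grad (\<lambda>b. ln (probit_post n x b)) \<beta>))
    = - 1 / (2 * integral\<^sup>L lborel (probit_lik n x)) * (a \<bullet> probit_lik_grad n x \<beta>)"
    unfolding grad_eqI[OF gderiv] Z_def[symmetric] using probit_lik_pos[of n x \<beta>] Z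
    by (simp add: post inner_scaleR_right field_simps)
qed

end

theorem mainTheorem7:
  fixes n :: nat and x :: "nat \<Rightarrow> real^'d" and a :: "real^'d"
  assumes nz: "\<And>i. i < n \<Longrightarrow> x i \<noteq> 0"
    and uniq: "\<exists>!b. \<forall>\<beta>. probit_lik n x \<beta> \<le> probit_lik n x b"
  shows "integrable lborel (probit_lik n x)
     \<and> ((\<lambda>\<rho>. sphere_integral \<rho>
            (\<lambda>\<beta>. probit_post n x \<beta> * (a \<bullet> (\<beta> /\<^sub>R norm \<beta>)))) \<longlongrightarrow> 0) at_top
     \<and> (\<forall>\<beta>. \<exists>D. GDERIV (\<lambda>b. ln (probit_post n x b)) \<beta> :> D)
     \<and> integrable lborel (\<lambda>\<beta>. probit_post n x \<beta> *
            (a \<bullet> (- (1/2) *\<^sub>R grad (\<lambda>b. ln (probit_post n x b)) \<beta>)))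
     \<and> (\<integral>\<beta>. probit_post n x \<beta> *
            (a \<bullet> (- (1/2) *\<^sub>R grad (\<lambda>b. ln (probit_post n x b)) \<beta>)) \<partial>lborel) = 0"
proof -
  obtain c where c: "0 < c" and descent: "\<And>\<beta>. \<exists>i<n. x i \<bullet> \<beta> \<le> - c * norm \<beta>"
    using probit_unique_max_imp_uniform_descent[OF uniq] by blast
  have estimator: "(\<lambda>\<beta>. probit_post n x \<beta> * (a \<bullet> (- (1/2) *\<^sub>R grad (\<lambda>b. ln (probit_post n x b)) \<beta>)))
      = (\<lambda>\<beta>. - 1 / (2 * integral\<^sup>L lborel (probit_lik n x)) * (a \<bullet> probit_lik_grad n x \<beta>))"
    by (intro ext probit_post_mult_grad_ln[OF c descent])
  show ?thesis
    unfolding estimator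
    using integrable_probit_lik[OF c descent] probit_post_has_gderiv_ln[OF c descent]
      integral_inner_probit_lik_grad[OF c descent, of a]
      sphere_integral_probit_post_tendsto_0[OF c descent abs_inner_sgn_le]
    by auto
qed

end
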